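(* Let $\varphi=\nu\tilde n.\sigma$ be a frame well-formed with respect to $\mathtt{s}\in\tilde n$ and let $q_{\mathtt{s}}$ be an occurrence (position) of $\mathtt{s}$ in $y\sigma$ for some $y\in\mathrm{dom}(\sigma)$. If $\varphi\nvdash\mathtt{s}$ then there exists a position $q<q_{\mathtt{s}}$ (strict prefix) such that the head symbol of $y\sigma|_q$ is $\mathsf{enc}$ or $\mathsf{enca}$ and $q\cdot1\le q_{\mathtt{s}}$.
   Context: Terms over $\Sigma=\{\mathsf{enc}/3,\mathsf{dec}/2,\mathsf{enca}/3,\mathsf{deca}/2,\mathsf{pub}/1,\mathsf{priv}/1,\langle\cdot,\cdot\rangle/2,\pi_1/1,\pi_2/1,\mathsf{sign}/2,\mathsf{check}/3,\mathsf{retrieve}/1\}$, constants, names and variables; destructors are $\pi_1,\pi_2,\mathsf{dec},\mathsf{deca},\mathsf{check},\mathsf{retrieve}$. Equational theory $E$: $\pi_i(\langle z_1,z_2\rangle)=z_i$, $\mathsf{dec}(\mathsf{enc}(z_1,z_2,z_3),z_2)=z_1$, $\mathsf{deca}(\mathsf{enca}(z_1,\mathsf{pub}(z_2),z_3),\mathsf{priv}(z_2))=z_1$, $\mathsf{check}(z_1,\mathsf{sign}(z_1,\mathsf{priv}(z_2)),\mathsf{pub}(z_2))=\mathsf{ok}$, $\mathsf{retrieve}(\mathsf{sign}(z_1,z_2))=z_1$. Positions are sequences of positive integers ordered by prefix $\le$, $T|_p$ the subterm at $p$. A frame $\varphi=\nu\tilde n.\sigma$: finite set of restricted names and acyclic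 substitution. $\varphi\vdash M$: least relation containing $x\sigma$ ($x\in\mathrm{dom}(\sigma)$) and names outside $\tilde n$, closed under application of any symbol other than $\mathsf{priv}$ and under $=_E$. An encryption occurrence $q$ in $U$ (head of $U|_q$ in $\{\mathsf{enc},\mathsf{enca}\}$) is an agent encryption w.r.t. names $\tilde m$ if $U|_{q\cdot3}\in\tilde m$, and a probabilistic encryption w.r.t. a set of terms $S$ if for all $V\in S$ and $p$ with $V|_p=U|_{q\cdot3}$, $p=q'\cdot3$ with $V|_{q'}=U|_q$. $\varphi$ is well-formed w.r.t. $\mathtt{s}$ if (1) every encryption in $\sigma$ is an agent encryption w.r.t. $\tilde n\setminus\{\mathtt{s}\}$ and a probabilistic encryption w.r.t. $\mathrm{ran}(\sigma)$; (2) for all subterms $\mathsf{enc}(M,K,R)$, $\mathsf{enca}(M',K',R')$, $\mathsf{sign}(U,V)$, $\mathsf{pub}(W)$, $\mathsf{priv}(W')$ of $\varphi$, $\mathtt{s}$ does not occur in $K,K',V,W,W',R,R'$; (3) $\varphi$ contains no destructor. *)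

theory Defs
  imports Main
begin

datatype sym = Enc | Dec | Enca | Deca | Pub | Priv | Pair | Pi1 | Pi2
  | Sign | Check | Retrieve | Cst string

fun arity :: "sym \<Rightarrow> nat" where
  "arity Enc = 3" | "arity Dec = 2" | "arity Enca = 3" | "arity Deca = 2"
| "arity Pub = 1" | "arity Priv = 1" | "arity Pair = 2" | "arity Pi1 = 1"
| "arity Pi2 = 1" | "arity Sign = 2" | "arity Check = 3" | "arity Retrieve = 1"
| "arity (Cst c) = 0"

definition destructors :: "sym set" where
  "destructors = {Pi1, Pi2, Dec, Deca, Check, Retrieve}"

datatype trm = Var string | Nm string | Fn sym "trm list"

fun wf_trm :: "trm \<Rightarrow> bool" where
  "wf_trm (Var x) = True"
| "wf_trm (Nm n) = True"
| "wf_trm (Fn f ts) = (length ts = arity f \<and> (\<forall>t\<in>set ts. wf_trm t))"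

definition ok :: trm where "ok = Fn (Cst ''ok'') []"

type_synonym pos = "nat list"

text \<open>Subterm at a position (positions are sequences of positive integers;
  argument i of a symbol is position i, starting at 1).\<close>
fun subt :: "trm \<Rightarrow> pos \<Rightarrow> trm option" where
  "subt t [] = Some t"
| "subt (Fn f ts) (i # p) =
     (if 1 \<le> i \<and> i \<le> length ts then subt (ts ! (i - 1)) p else None)"
| "subt _ (i # p) = None"

definition subterms :: "trm \<Rightarrow> trm set" where
  "subterms t = {u. \<exists>p. subt t p = Some u}"

fun head :: "trm \<Rightarrow> sym option" where
  "head (Fn f ts) = Some f"
| "head _ = None"

definition strict_prefix_pos :: "pos \<Rightarrow> pos \<Rightarrow> bool" where
  "strict_prefix_pos p q \<longleftrightarrow> (\<exists>r. r \<noteq> [] \<and> q = p @ r)"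

definition prefix_pos :: "pos \<Rightarrow> pos \<Rightarrow> bool" where
  "prefix_pos p q \<longleftrightarrow> (\<exists>r. q = p @ r)"

fun vars :: "trm \<Rightarrow> string set" where
  "vars (Var x) = {x}"
| "vars (Nm n) = {}"
| "vars (Fn f ts) = (\<Union>t\<in>set ts. vars t)"

fun syms :: "trm \<Rightarrow> sym set" where
  "syms (Var x) = {}"
| "syms (Nm n) = {}"
| "syms (Fn f ts) = insert f (\<Union>t\<in>set ts. syms t)"

fun names :: "trm \<Rightarrow> string set" where
  "names (Var x) = {}"
| "names (Nm n) = {n}"
| "names (Fn f ts) = (\<Union>t\<in>set ts. names t)"

inductive eqE :: "trm \<Rightarrow> trm \<Rightarrow> bool" where
  refl: "eqE t t"
| sym: "eqE t u \<Longrightarrow> eqE u t"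
| trans: "eqE t u \<Longrightarrow> eqE u v \<Longrightarrow> eqE t v"
| cong: "list_all2 eqE ts us \<Longrightarrow> eqE (Fn f ts) (Fn f us)"
| pi1: "eqE (Fn Pi1 [Fn Pair [z1, z2]]) z1"
| pi2: "eqE (Fn Pi2 [Fn Pair [z1, z2]]) z2"
| dec: "eqE (Fn Dec [Fn Enc [z1, z2, z3], z2]) z1"
| deca: "eqE (Fn Deca [Fn Enca [z1, Fn Pub [z2], z3], Fn Priv [z2]]) z1"
| check: "eqE (Fn Check [z1, Fn Sign [z1, Fn Priv [z2]], Fn Pub [z2]]) ok"
| retrieve: "eqE (Fn Retrieve [Fn Sign [z1, z2]]) z1"

text \<open>A frame \<open>\<nu>\<tilde>n.\<sigma>\<close>: a set of restricted names and a substitution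
  given as a partial map from variables to terms.\<close>
record frame =
  restr :: "string set"
  subst :: "string \<Rightarrow> trm option"

fun app1 :: "(string \<Rightarrow> trm option) \<Rightarrow> trm \<Rightarrow> trm" where
  "app1 \<sigma> (Var x) = (case \<sigma> x of Some t \<Rightarrow> t | None \<Rightarrow> Var x)"
| "app1 \<sigma> (Nm n) = Nm n"
| "app1 \<sigma> (Fn f ts) = Fn f (map (app1 \<sigma>) ts)"

definition dep :: "(string \<Rightarrow> trm option) \<Rightarrow> (string \<times> string) set" where
  "dep \<sigma> = {(x, y). \<exists>t. \<sigma> y = Some t \<and> x \<in> vars t}"

definition valid_frame :: "frame \<Rightarrow> bool" where
  "valid_frame \<phi> \<longleftrightarrow> finite (restr \<phi>) \<and> finite (dom (subst \<phi>))
     \<and> acyclic (dep (subst \<phi>))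
     \<and> (\<forall>t\<in>ran (subst \<phi>). wf_trm t)"

text \<open>Application of an acyclic substitution (iterated until it stabilises;
  \<open>card (dom \<sigma>)\<close> rounds suffice for an acyclic substitution).\<close>
definition apply_frame :: "frame \<Rightarrow> trm \<Rightarrow> trm" where
  "apply_frame \<phi> t = (app1 (subst \<phi>) ^^ card (dom (subst \<phi>))) t"

inductive ded :: "frame \<Rightarrow> trm \<Rightarrow> bool" where
  ded_var: "x \<in> dom (subst \<phi>) \<Longrightarrow> ded \<phi> (apply_frame \<phi> (Var x))"
| ded_name: "n \<notin> restr \<phi> \<Longrightarrow> ded \<phi> (Nm n)"
| ded_fun: "f \<noteq> Priv \<Longrightarrow> length ts = arity f \<Longrightarrow> (\<forall>t\<in>set ts. ded \<phi> t)
             \<Longrightarrow> ded \<phi> (Fn f ts)"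
| ded_eq: "ded \<phi> M \<Longrightarrow> eqE M N \<Longrightarrow> ded \<phi> N"

definition enc_occ :: "trm \<Rightarrow> pos \<Rightarrow> bool" where
  "enc_occ U q \<longleftrightarrow> (\<exists>u. subt U q = Some u \<and> head u \<in> {Some Enc, Some Enca})"

definition agent_enc :: "string set \<Rightarrow> trm \<Rightarrow> pos \<Rightarrow> bool" where
  "agent_enc m U q \<longleftrightarrow> (\<exists>n\<in>m. subt U (q @ [3]) = Some (Nm n))"

definition prob_enc :: "trm set \<Rightarrow> trm \<Rightarrow> pos \<Rightarrow> bool" where
  "prob_enc S U q \<longleftrightarrow> (\<forall>V\<in>S. \<forall>p. subt V p = subt U (q @ [3]) \<longrightarrow>
       (\<exists>q'. p = q' @ [3] \<and> subt V q' = subt U q))"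

definition frame_subterms :: "frame \<Rightarrow> trm set" where
  "frame_subterms \<phi> = (\<Union>t\<in>ran (subst \<phi>). subterms t)"

definition well_formed :: "frame \<Rightarrow> string \<Rightarrow> bool" where
  "well_formed \<phi> s \<longleftrightarrow>
     (\<forall>U\<in>ran (subst \<phi>). \<forall>q. enc_occ U q \<longrightarrow>
         agent_enc (restr \<phi> - {s}) U q \<and> prob_enc (ran (subst \<phi>)) U q)
   \<and> (\<forall>u\<in>frame_subterms \<phi>.
         (\<forall>M K R. u = Fn Enc [M, K, R] \<longrightarrow> s \<notin> names K \<and> s \<notin> names R)
       \<and> (\<forall>M K R. u = Fn Enca [M, K, R] \<longrightarrow> s \<notin> names K \<and> s \<notin> names R)
       \<and> (\<forall>U V. u = Fn Sign [U, V] \<longrightarrow> s \<notin> names V)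
       \<and> (\<forall>W. u = Fn Pub [W] \<longrightarrow> s \<notin> names W)
       \<and> (\<forall>W. u = Fn Priv [W] \<longrightarrow> s \<notin> names W))
   \<and> (\<forall>t\<in>ran (subst \<phi>). syms t \<inter> destructors = {})"

end

theory Submission
  imports Defs
begin

text \<open>
  An occurrence of \<open>s\<close> in the instance \<open>y\<sigma>\<close> is inherited from an occurrence in
  some term \<open>r \<in> ran \<sigma>\<close>, and the full instance of \<open>r\<close> is deducible, being \<open>z\<sigma>\<close>
  for \<open>\<sigma> z = r\<close>. Walk from the root of \<open>r\<close> towards \<open>s\<close>, keeping the current instance
  deducible: pairs are opened by projection and signatures by \<open>retrieve\<close>; by
  well-formedness \<open>s\<close> never lies inside a key, a random seed, a signing key or an
  argument of \<open>pub\<close>/\<open>priv\<close>, and no destructor occurs. As \<open>s\<close> itself is not deducible,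
  the walk must stop at an encryption whose plaintext contains the occurrence.
\<close>

lemma subt_append: "subt t (p @ q) = (case subt t p of Some u \<Rightarrow> subt u q | None \<Rightarrow> None)"
  by (induction t p rule: subt.induct) auto

lemma subt_Nm_iff [simp]: "subt (Nm n) p = Some u \<longleftrightarrow> p = [] \<and> u = Nm n"
  by (cases p) auto

lemma subt_Var_iff [simp]: "subt (Var x) p = Some u \<longleftrightarrow> p = [] \<and> u = Var x"
  by (cases p) auto

lemma subt_app1: "subt t p = Some u \<Longrightarrow> subt (app1 \<sigma> t) p = Some (app1 \<sigma> u)"
  by (induction t p arbitrary: u rule: subt.induct) (auto split: if_splits)

lemma subt_funpow_app1:
  "subt t p = Some u \<Longrightarrow> subt ((app1 \<sigma> ^^ j) t) p = Some ((app1 \<sigma> ^^ j) u)"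
  by (induction j) (auto intro: subt_app1)

lemma funpow_app1_Fn [simp]: "(app1 \<sigma> ^^ j) (Fn f ts) = Fn f (map (app1 \<sigma> ^^ j) ts)"
  by (induction j) auto

lemma funpow_app1_Nm [simp]: "(app1 \<sigma> ^^ j) (Nm n) = Nm n"
  by (induction j) auto

lemma names_subt: "subt t p = Some (Nm n) \<Longrightarrow> n \<in> names t"
  by (induction t p rule: subt.induct) (force split: if_splits)+

lemma syms_subt: "subt t p = Some u \<Longrightarrow> syms u \<subseteq> syms t"
  by (induction t p rule: subt.induct) (force split: if_splits)+

lemma wf_trm_subt: "subt t p = Some u \<Longrightarrow> wf_trm t \<Longrightarrow> wf_trm u"
  by (induction t p rule: subt.induct) (auto split: if_splits)

lemma subt_app1_Nm_origin:
  "subt (app1 \<sigma> t) p = Some (Nm n) \<Longrightarrow> subt t p = Some (Nm n) \<or>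
    (\<exists>p1 p2 x u. p = p1 @ p2 \<and> subt t p1 = Some (Var x)
      \<and> \<sigma> x = Some u \<and> subt u p2 = Some (Nm n))"
proof (induction t p rule: subt.induct)
  case (1 t)
  then show ?case by (cases t) (auto split: option.splits)
next
  case (2 f ts i p)
  then have i: "1 \<le> i" "i \<le> length ts" and IH: "subt (ts ! (i - 1)) p = Some (Nm n) \<or>
    (\<exists>p1 p2 x u. p = p1 @ p2 \<and> subt (ts ! (i - 1)) p1 = Some (Var x)
      \<and> \<sigma> x = Some u \<and> subt u p2 = Some (Nm n))"
    by (auto split: if_splits)
  from IH show ?case
  proof
    assume "\<exists>p1 p2 x u. p = p1 @ p2 \<and> subt (ts ! (i - 1)) p1 = Some (Var x)
      \<and> \<sigma> x = Some u \<and> subt u p2 = Some (Nm n)"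
    then obtain p1 p2 x u where "p = p1 @ p2" "subt (ts ! (i - 1)) p1 = Some (Var x)"
      "\<sigma> x = Some u" "subt u p2 = Some (Nm n)"
      by blast
    moreover from i \<open>subt (ts ! (i - 1)) p1 = _\<close> have "subt (Fn f ts) (i # p1) = Some (Var x)"
      by simp
    ultimately show ?thesis by (metis append_Cons)
  qed (use i in auto)
next
  case ("3_1" x i p)
  then show ?case by (auto split: option.splits intro!: exI[of _ "[]"])
qed simp

lemma subt_funpow_app1_Nm_origin:
  "subt ((app1 \<sigma> ^^ k) t) p = Some (Nm n) \<Longrightarrow>
   \<exists>p1 p2 r j. p = p1 @ p2 \<and> subt ((app1 \<sigma> ^^ k) t) p1 = Some ((app1 \<sigma> ^^ j) r)
      \<and> subt r p2 = Some (Nm n) \<and> (r = t \<or> r \<in> ran \<sigma>)"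
proof (induction k arbitrary: p)
  case 0
  then show ?case by (intro exI[of _ "[]"] exI[of _ p] exI[of _ t] exI[of _ 0]) auto
next
  case (Suc k)
  let ?T = "(app1 \<sigma> ^^ k) t"
  have Tp: "subt (app1 \<sigma> ?T) p = Some (Nm n)" using Suc.prems by simp
  then consider "subt ?T p = Some (Nm n)"
    | p1 p2 x u where "p = p1 @ p2" "subt ?T p1 = Some (Var x)" "\<sigma> x = Some u"
        "subt u p2 = Some (Nm n)"
    using subt_app1_Nm_origin[OF Tp] by blast
  then show ?case
  proof cases
    case 1
    then obtain p1 p2 r j where "p = p1 @ p2" "subt ?T p1 = Some ((app1 \<sigma> ^^ j) r)"
      "subt r p2 = Some (Nm n)" "r = t \<or> r \<in> ran \<sigma>"
      using Suc.IH by blast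
    moreover from \<open>subt ?T p1 = _\<close>
    have "subt ((app1 \<sigma> ^^ Suc k) t) p1 = Some ((app1 \<sigma> ^^ Suc j) r)"
      by (simp add: subt_app1)
    ultimately show ?thesis by blast
  next
    case (2 p1 p2 x u)
    from 2 have "subt ((app1 \<sigma> ^^ Suc k) t) p1 = Some ((app1 \<sigma> ^^ 0) u)"
      using subt_app1[OF 2(2), of \<sigma>] by simp
    moreover from 2 have "u \<in> ran \<sigma>" by (auto simp: ran_def)
    ultimately show ?thesis using 2 by blast
  qed
qed

lemma ran_subset_frame_subterms: "ran (subst \<phi>) \<subseteq> frame_subterms \<phi>"
  unfolding frame_subterms_def subterms_def by (force intro: exI[of _ "[]"])

lemma frame_subterms_arg:
  assumes "Fn f ts \<in> frame_subterms \<phi>" "1 \<le> i" "i \<le> length ts"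
  shows "ts ! (i - 1) \<in> frame_subterms \<phi>"
proof -
  from assms(1) obtain t p where "t \<in> ran (subst \<phi>)" "subt t p = Some (Fn f ts)"
    unfolding frame_subterms_def subterms_def by blast
  with assms(2,3) have "subt t (p @ [i]) = Some (ts ! (i - 1))" by (simp add: subt_append)
  with \<open>t \<in> ran (subst \<phi>)\<close> show ?thesis unfolding frame_subterms_def subterms_def by blast
qed

lemma wf_trm_frame_subterm: "valid_frame \<phi> \<Longrightarrow> u \<in> frame_subterms \<phi> \<Longrightarrow> wf_trm u"
  unfolding valid_frame_def frame_subterms_def subterms_def by (auto intro: wf_trm_subt)

lemma frame_subterm_not_destructor:
  "well_formed \<phi> s \<Longrightarrow> Fn f ts \<in> frame_subterms \<phi> \<Longrightarrow> f \<notin> destructors"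
  unfolding well_formed_def frame_subterms_def subterms_def by (fastforce dest: syms_subt)

lemma ded_frame_subterm_arg:
  assumes wf: "well_formed \<phi> s" "valid_frame \<phi>" and u: "Fn f ts \<in> frame_subterms \<phi>"
    and ded: "ded \<phi> (Fn f (map a ts))"
    and i: "1 \<le> i" "i \<le> length ts" and s: "s \<in> names (ts ! (i - 1))"
  shows "f \<in> {Enc, Enca} \<and> i = 1 \<or> ded \<phi> (a (ts ! (i - 1)))"
proof -
  have len: "length ts = arity f" using wf_trm_frame_subterm[OF wf(2) u] by simp
  have "f \<notin> destructors" using frame_subterm_not_destructor[OF wf(1) u] .
  then consider "f \<in> {Enc, Enca}" | "f \<in> {Pub, Priv}" | "f = Sign" | "f = Pair"
    | c where "f = Cst c"
    by (cases f) (auto simp: destructors_def)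
  then show ?thesis
  proof cases
    case 1
    then obtain M K R where "ts = [M, K, R]" using len by (auto simp: numeral_eq_Suc length_Suc_conv)
    with 1 i s wf(1) u show ?thesis by (auto simp: well_formed_def nth_Cons split: nat.splits)
  next
    case 2
    then obtain W where "ts = [W]" using len by (auto simp: length_Suc_conv)
    with 2 i s wf(1) u show ?thesis by (auto simp: well_formed_def)
  next
    case 3
    then obtain U V where ts: "ts = [U, V]" using len by (auto simp: numeral_eq_Suc length_Suc_conv)
    have "ded \<phi> (Fn Retrieve [Fn Sign [a U, a V]])"
      using ded 3 ts by (intro ded_fun) auto
    then have "ded \<phi> (a U)" by (rule ded_eq) (rule eqE.retrieve)
    with 3 ts i s wf(1) u show ?thesis by (auto simp: well_formed_def nth_Cons split: nat.splits)
  next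
    case 4
    then obtain U V where ts: "ts = [U, V]" using len by (auto simp: numeral_eq_Suc length_Suc_conv)
    have "ded \<phi> (Fn Pi1 [Fn Pair [a U, a V]])" "ded \<phi> (Fn Pi2 [Fn Pair [a U, a V]])"
      using ded 4 ts by (auto intro!: ded_fun)
    then have "ded \<phi> (a U)" "ded \<phi> (a V)" by (auto elim: ded_eq intro: eqE.pi1 eqE.pi2)
    with ts i show ?thesis by (auto simp: nth_Cons split: nat.splits)
  next
    case 5
    then show ?thesis using len i by simp
  qed
qed

lemma ded_frame_subterm_enc_above_secret:
  assumes wf: "well_formed \<phi> s" "valid_frame \<phi>" and secret: "\<not> ded \<phi> (Nm s)"
  shows "u \<in> frame_subterms \<phi> \<Longrightarrow> ded \<phi> ((app1 \<sigma> ^^ j) u) \<Longrightarrow> subt u p = Some (Nm s) \<Longrightarrow>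
    \<exists>q w. strict_prefix_pos q p \<and> subt u q = Some w \<and> head w \<in> {Some Enc, Some Enca}
      \<and> prefix_pos (q @ [1]) p"
proof (induction p arbitrary: u)
  case Nil
  then show ?case using secret by simp
next
  case (Cons i p)
  then obtain f ts where u: "u = Fn f ts" by (cases u) auto
  with Cons.prems(3) have i: "1 \<le> i" "i \<le> length ts"
    and arg: "subt (ts ! (i - 1)) p = Some (Nm s)"
    by (auto split: if_splits)
  from Cons.prems(1,2) u have "f \<in> {Enc, Enca} \<and> i = 1 \<or> ded \<phi> ((app1 \<sigma> ^^ j) (ts ! (i - 1)))"
    by (intro ded_frame_subterm_arg[OF wf] i names_subt[OF arg]) auto
  then show ?case
  proof
    assume "f \<in> {Enc, Enca} \<and> i = 1"
    with u show ?thesis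
      by (intro exI[of _ "[]"] exI[of _ u]) (auto simp: strict_prefix_pos_def prefix_pos_def)
  next
    assume "ded \<phi> ((app1 \<sigma> ^^ j) (ts ! (i - 1)))"
    with Cons.IH[OF frame_subterms_arg[OF Cons.prems(1)[unfolded u] i]] arg
    obtain q w where "strict_prefix_pos q p" "subt (ts ! (i - 1)) q = Some w"
      "head w \<in> {Some Enc, Some Enca}" "prefix_pos (q @ [1]) p" by blast
    with u i show ?thesis
      by (intro exI[of _ "i # q"] exI[of _ w]) (auto simp: strict_prefix_pos_def prefix_pos_def)
  qed
qed

lemma apply_frame_Var:
  assumes "finite (dom (subst \<phi>))" "subst \<phi> x = Some t"
  shows "apply_frame \<phi> (Var x) = (app1 (subst \<phi>) ^^ (card (dom (subst \<phi>)) - 1)) t"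
proof -
  have "card (dom (subst \<phi>)) > 0"
    using assms by (auto simp: card_gt_0_iff)
  then obtain k where k: "card (dom (subst \<phi>)) = Suc k"
    using gr0_conv_Suc by blast
  have "(app1 (subst \<phi>) ^^ Suc k) (Var x) = (app1 (subst \<phi>) ^^ k) t"
    using assms(2) by (simp only: funpow_Suc_right o_apply) simp
  with k show ?thesis unfolding apply_frame_def by simp
qed

lemma head_funpow_app1_Fn: "head w = Some f \<Longrightarrow> head ((app1 \<sigma> ^^ j) w) = Some f"
  by (cases w) auto

theorem lemma2p11:
  fixes \<phi> :: frame and s y :: string and qs :: pos
  assumes "valid_frame \<phi>"
    and "well_formed \<phi> s"
    and "s \<in> restr \<phi>"
    and "y \<in> dom (subst \<phi>)"
    and "subt (apply_frame \<phi> (Var y)) qs = Some (Nm s)"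
    and "\<not> ded \<phi> (Nm s)"
  shows "\<exists>q. strict_prefix_pos q qs
           \<and> head (the (subt (apply_frame \<phi> (Var y)) q)) \<in> {Some Enc, Some Enca}
           \<and> prefix_pos (q @ [1]) qs"
proof -
  let ?\<sigma> = "subst \<phi>"
  from subt_funpow_app1_Nm_origin[OF assms(5)[unfolded apply_frame_def]]
  obtain p1 p2 r j where qs: "qs = p1 @ p2"
    and r_inst: "subt (apply_frame \<phi> (Var y)) p1 = Some ((app1 ?\<sigma> ^^ j) r)"
    and r_s: "subt r p2 = Some (Nm s)" and "r = Var y \<or> r \<in> ran ?\<sigma>"
    unfolding apply_frame_def by blast
  then obtain z where z: "?\<sigma> z = Some r" by (auto simp: ran_def)
  have "ded \<phi> (apply_frame \<phi> (Var z))"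
    using z by (intro ded_var) auto
  then have "ded \<phi> ((app1 ?\<sigma> ^^ (card (dom ?\<sigma>) - 1)) r)"
    using apply_frame_Var[OF _ z] assms(1) by (simp add: valid_frame_def)
  moreover have "r \<in> frame_subterms \<phi>"
    using z ran_subset_frame_subterms by (blast intro: ranI)
  ultimately obtain q w where "strict_prefix_pos q p2" "subt r q = Some w"
    "head w \<in> {Some Enc, Some Enca}" "prefix_pos (q @ [1]) p2"
    using ded_frame_subterm_enc_above_secret[OF assms(2,1,6)] r_s by blast
  moreover from r_inst \<open>subt r q = Some w\<close>
  have "subt (apply_frame \<phi> (Var y)) (p1 @ q) = Some ((app1 ?\<sigma> ^^ j) w)"
    by (simp add: subt_append subt_funpow_app1)
  ultimately show ?thesis using qs head_funpow_app1_Fn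
    by (intro exI[of _ "p1 @ q"]) (auto simp: strict_prefix_pos_def prefix_pos_def)
qed

end
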